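(* Let $x=x[1..n]$ be an indeterminate string with prefix table $\pi[1..n]$. Algorithm PCInd (described in the context), run on input $\pi$, outputs exactly the set $\Gamma$ of lengths $\kappa$ of rooted covers of $x$. It runs in $O(n^2)$ time (unit-cost elementary operations) and uses $O(n)$ extra space.
   Context: An indeterminate string $x=x[1..n]$ over an alphabet $\Sigma$ is a sequence of nonempty subsets of $\Sigma$. Two entries match, $x[i]\approx x[j]$, iff $x[i]\cap x[j]\neq\emptyset$; strings $u,w$ match ($u\approx w$) iff $|u|=|w|$ and $u[k]\approx w[k]$ for all $k$. The prefix table of $x$ is the array $\pi[1..n]$ with $\pi[1]=n$ and, for $i\in 2..n$, $\pi[i]$ the largest $\ell\ge0$ with $x[i..i+\ell-1]\approx x[1..\ell]$. A rooted cover of $x$ of length $\kappa$, $1\le\kappa<n$, is one such that every position $k\in 1..n$ lies in some interval $[p,p+\kappa-1]\subseteq[1,n]$ with $x[p..p+\kappa-1]\approx x[1..\kappa]$ (every covering substring matches the prefix of length $\kappa$; in particular the suffix of length $\kappa$ matches $x[1..\kappa]$). Algorithm PCInd (input $\pi[1..n]$, output a set $\Gamma$): Set $\Gamma\leftarrow\emptyset$, $maxlive[1..n]\leftarrow 0$, $max\leftarrow\max(\pi[2..n])$. Let $\mathcal L$ be the list, in increasing order, of the candidate lengths: the values $\pi[i]$ with $2\le i\le n$, $\pi[i]\ge 1$ and $\pi[i]+i-1=n$ (all of which are $\le max$). For $i=2,\dots,n$: set $\mathcal D\leftarrow\emptyset$ (a stack); for each $v\in\mathcal L$ in increasing order: if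 $v>\pi[i]$, stop scanning $\mathcal L$ for this $i$; otherwise let $t\leftarrow i+v-1$; if ($maxlive[v]=0$ and $t\le 2v$) or $maxlive[v]\ge t-v$ then $maxlive[v]\leftarrow t$, else $maxlive[v]\leftarrow-1$ and push $v$ onto $\mathcal D$. After the scan, pop every element of $\mathcal D$ and delete it from $\mathcal L$. Finally, for $k=1,\dots,n$: if $maxlive[k]=n$, add $k$ to $\Gamma$. Output $\Gamma$. *)

theory Defs
  imports Main
begin

text \<open>Indeterminate strings: x[1..n] is modelled as a function x :: nat => 'a set,
  of which only the positions 1..n are relevant (1-based indexing as in the paper).\<close>

definition ind_string :: "(nat \<Rightarrow> 'a set) \<Rightarrow> nat \<Rightarrow> bool" where
  "ind_string x n \<longleftrightarrow> n \<ge> 1 \<and> (\<forall>i\<in>{1..n}. x i \<noteq> {})"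

definition substr_match :: "(nat \<Rightarrow> 'a set) \<Rightarrow> nat \<Rightarrow> nat \<Rightarrow> nat \<Rightarrow> bool" where
  "substr_match x i j l \<longleftrightarrow> (\<forall>k<l. x (i + k) \<inter> x (j + k) \<noteq> {})"

definition prefix_table :: "(nat \<Rightarrow> 'a set) \<Rightarrow> nat \<Rightarrow> nat \<Rightarrow> nat" where
  "prefix_table x n i =
     (if i = 1 then n
      else if 2 \<le> i \<and> i \<le> n then (GREATEST l. l \<le> n + 1 - i \<and> substr_match x i 1 l)
      else 0)"

definition rooted_cover :: "(nat \<Rightarrow> 'a set) \<Rightarrow> nat \<Rightarrow> nat \<Rightarrow> bool" where
  "rooted_cover x n \<kappa> \<longleftrightarrow> 1 \<le> \<kappa> \<and> \<kappa> < n \<and>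
     (\<forall>k\<in>{1..n}. \<exists>p. 1 \<le> p \<and> p + \<kappa> - 1 \<le> n \<and> p \<le> k \<and> k \<le> p + \<kappa> - 1
                      \<and> substr_match x p 1 \<kappa>)"

text \<open>Inner scan of the list L for a fixed i. Arguments: pi, i, remaining list,
  maxlive, stack D, step counter. Every inspected element of L costs one step.\<close>
fun pc_scan :: "(nat \<Rightarrow> nat) \<Rightarrow> nat \<Rightarrow> nat list \<Rightarrow> (nat \<Rightarrow> int) \<Rightarrow> nat list \<Rightarrow> nat
                 \<Rightarrow> (nat \<Rightarrow> int) \<times> nat list \<times> nat" where
  "pc_scan pi i [] ml D c = (ml, D, c)"
| "pc_scan pi i (v # vs) ml D c =
     (if v > pi i then (ml, D, c + 1)
      else (let t = i + v - 1 in
            if (ml v = 0 \<and> t \<le> 2 * v) \<or> ml v \<ge> int (t - v)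
            then pc_scan pi i vs (ml(v := int t)) D (c + 1)
            else pc_scan pi i vs (ml(v := -1)) (v # D) (c + 1)))"

text \<open>State: (L, maxlive, steps, space),
  where space records the maximal extra storage used so far
  (n cells of maxlive plus the current sizes of L and D).
  Popping D and deleting its elements from L costs one step per element.\<close>
definition pc_step :: "(nat \<Rightarrow> nat) \<Rightarrow> nat \<Rightarrow> nat
     \<Rightarrow> nat list \<times> (nat \<Rightarrow> int) \<times> nat \<times> nat \<Rightarrow> nat list \<times> (nat \<Rightarrow> int) \<times> nat \<times> nat" where
  "pc_step pi n i st =
     (case st of (L, ml, c, sp) \<Rightarrow>
       (case pc_scan pi i L ml [] c of (ml', D, c') \<Rightarrow>
          (filter (\<lambda>v. v \<notin> set D) L, ml', c' + 1 + length D,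
           max sp (n + length L + length D))))"

definition pc_candidates :: "(nat \<Rightarrow> nat) \<Rightarrow> nat \<Rightarrow> nat list" where
  "pc_candidates pi n = sort [pi i. i \<leftarrow> [2..<n+1], 1 \<le> pi i \<and> pi i + i - 1 = n]"

text \<open>Initialisation of maxlive, computing max(pi[2..n]) and building the candidate list
  are charged n steps each; the final loop is charged n steps.\<close>
definition pc_run :: "(nat \<Rightarrow> nat) \<Rightarrow> nat \<Rightarrow> nat set \<times> nat \<times> nat" where
  "pc_run pi n =
     (let L0 = pc_candidates pi n;
          (L, ml, c, sp) = fold (pc_step pi n) [2..<n+1] (L0, (\<lambda>_. 0), 3 * n, n + length L0)
      in ({k \<in> {1..n}. ml k = int n}, c + n, sp))"

definition PCInd :: "(nat \<Rightarrow> nat) \<Rightarrow> nat \<Rightarrow> nat set" where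
  "PCInd pi n = fst (pc_run pi n)"

definition PCInd_time :: "(nat \<Rightarrow> nat) \<Rightarrow> nat \<Rightarrow> nat" where
  "PCInd_time pi n = fst (snd (pc_run pi n))"

definition PCInd_space :: "(nat \<Rightarrow> nat) \<Rightarrow> nat \<Rightarrow> nat" where
  "PCInd_space pi n = snd (snd (pc_run pi n))"

end

theory Submission
  imports Defs
begin

text \<open>For a fixed candidate v, the value maxlive[v] after processing positions 2..m-1 only depends
  on the last occurrence lo < m of the prefix of length v that the prefix table records: it is -1
  if x[1..lo+v-1] is not covered by such occurrences, and otherwise lo+v-1 (or 0 while lo = 1).
  The two tests of the algorithm are exactly the conditions for the cover to extend when a new
  occurrence starts at position m, so at m = n+1 the value is n precisely for the lengths of rooted
  covers. Each outer iteration inspects at most n candidates, which gives the quadratic time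
  bound; besides maxlive the algorithm only stores the lists L and D.\<close>

definition maxlive_upd :: "(nat \<Rightarrow> nat) \<Rightarrow> nat \<Rightarrow> nat \<Rightarrow> int \<Rightarrow> int" where
  "maxlive_upd pi i v a =
     (if v > pi i then a
      else let t = i + v - 1 in if (a = 0 \<and> t \<le> 2 * v) \<or> a \<ge> int (t - v) then int t else -1)"

lemma maxlive_upd_neg [simp]: "maxlive_upd pi i v (-1) = -1"
  by (simp add: maxlive_upd_def Let_def)

lemma maxlive_upd_beyond [simp]: "pi i < v \<Longrightarrow> maxlive_upd pi i v a = a"
  by (simp add: maxlive_upd_def)

lemma pc_scan_spec:
  assumes "sorted L" "distinct L" "pc_scan pi i L ml D c = (ml', D', c')"
  shows "ml' = (\<lambda>v. if v \<in> set L then maxlive_upd pi i v (ml v) else ml v) \<and>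
    set D' = set D \<union> {v \<in> set L. v \<le> pi i \<and> maxlive_upd pi i v (ml v) = -1} \<and>
    length D' \<le> length D + length L \<and> c' \<le> c + length L"
  using assms
proof (induction L arbitrary: ml D c)
  case (Cons v vs)
  have vs: "sorted vs" "distinct vs" "v \<notin> set vs" "\<forall>w\<in>set vs. v \<le> w"
    using Cons.prems by auto
  show ?case
  proof (cases "v > pi i")
    case True
    then have "\<forall>w\<in>set vs. pi i < w" using vs by fastforce
    with True Cons.prems show ?thesis by (auto simp: maxlive_upd_def)
  next
    case False
    define t where "t = i + v - 1"
    let ?pass = "(ml v = 0 \<and> t \<le> 2 * v) \<or> ml v \<ge> int (t - v)"
    have upd: "maxlive_upd pi i v (ml v) = (if ?pass then int t else -1)"
      using False by (simp add: maxlive_upd_def t_def Let_def)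
    have step: "pc_scan pi i (v # vs) ml D c = (if ?pass
        then pc_scan pi i vs (ml(v := int t)) D (c + 1)
        else pc_scan pi i vs (ml(v := -1)) (v # D) (c + 1))"
      using False by (simp add: t_def Let_def)
    show ?thesis
    proof (cases ?pass)
      case True
      with Cons.prems(3) have "pc_scan pi i vs (ml(v := int t)) D (c + 1) = (ml', D', c')"
        by (simp only: step if_True)
      from Cons.IH[OF vs(1,2) this] vs(3) upd True show ?thesis
        by (auto simp: fun_eq_iff)
    next
      case pass: False
      with Cons.prems(3) have "pc_scan pi i vs (ml(v := -1)) (v # D) (c + 1) = (ml', D', c')"
        by (simp only: step if_False)
      from Cons.IH[OF vs(1,2) this] vs(3) upd pass False show ?thesis
        by (auto simp: fun_eq_iff)
    qed
  qed
qed simp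

lemma pc_step_spec:
  assumes L0: "sorted L0" "distinct L0" "length L0 \<le> n"
    and L: "L = filter (\<lambda>v. ml v \<noteq> -1) L0"
    and step: "pc_step pi n i (L, ml, c, sp) = (L', ml', c', sp')"
  shows "ml' = (\<lambda>v. if v \<in> set L0 then maxlive_upd pi i v (ml v) else ml v)"
    and "L' = filter (\<lambda>v. ml' v \<noteq> -1) L0"
    and "c' \<le> c + 2 * n + 1" and "sp' \<le> max sp (3 * n)"
proof -
  obtain ml1 D c1 where scan: "pc_scan pi i L ml [] c = (ml1, D, c1)"
    by (metis prod_cases3)
  have res: "L' = filter (\<lambda>v. v \<notin> set D) L" "ml' = ml1" "c' = c1 + 1 + length D"
     "sp' = max sp (n + length L + length D)"
    using step scan by (auto simp: pc_step_def)
  have "sorted L" "distinct L" using L0 L by (auto simp: sorted_wrt_filter)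
  note S = pc_scan_spec[OF this scan]
  have "length L \<le> n" using L0(3) L by (metis dual_order.trans length_filter_le)
  show ml': "ml' = (\<lambda>v. if v \<in> set L0 then maxlive_upd pi i v (ml v) else ml v)"
    using S res(2) L by (auto simp: fun_eq_iff)
  have "ml v \<noteq> -1 \<and> v \<notin> set D \<longleftrightarrow> ml' v \<noteq> -1" if "v \<in> set L0" for v
  proof (cases "ml v = -1")
    case False
    then have "v \<in> set L" using L that by simp
    then show ?thesis using S ml' False that by (cases "pi i < v") auto
  qed (use ml' that in simp)
  then show "L' = filter (\<lambda>v. ml' v \<noteq> -1) L0"
    unfolding res(1) L filter_filter by (auto intro: filter_cong)
  show "c' \<le> c + 2 * n + 1" "sp' \<le> max sp (3 * n)"
    using res S \<open>length L \<le> n\<close> by auto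
qed

definition maxlive_after :: "(nat \<Rightarrow> nat) \<Rightarrow> nat \<Rightarrow> nat \<Rightarrow> int" where
  "maxlive_after pi v m = foldl (\<lambda>a j. maxlive_upd pi j v a) 0 [2..<m]"

lemma fold_pc_step_spec:
  assumes L0: "sorted L0" "distinct L0" "length L0 \<le> n" and "2 \<le> m"
  obtains ml c sp
  where "fold (pc_step pi n) [2..<m] (L0, \<lambda>_. 0, 3 * n, n + length L0)
           = (filter (\<lambda>v. ml v \<noteq> -1) L0, ml, c, sp)"
    and "ml = (\<lambda>v. if v \<in> set L0 then maxlive_after pi v m else 0)"
    and "c \<le> 3 * n + (m - 2) * (2 * n + 1)" and "sp \<le> 3 * n"
  using assms(4)
proof (induction m arbitrary: thesis rule: dec_induct)
  case base
  show ?case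
    by (rule base) (use L0(3) in \<open>auto simp: maxlive_after_def intro: filter_True[symmetric]\<close>)
next
  case (step m)
  obtain ml c sp where IH: "fold (pc_step pi n) [2..<m] (L0, \<lambda>_. 0, 3 * n, n + length L0)
           = (filter (\<lambda>v. ml v \<noteq> -1) L0, ml, c, sp)"
    "ml = (\<lambda>v. if v \<in> set L0 then maxlive_after pi v m else 0)"
    "c \<le> 3 * n + (m - 2) * (2 * n + 1)" "sp \<le> 3 * n"
    using step.IH by blast
  obtain L' ml' c' sp' where S: "pc_step pi n m (filter (\<lambda>v. ml v \<noteq> -1) L0, ml, c, sp) = (L', ml', c', sp')"
    by (metis prod_cases4)
  note T = pc_step_spec[OF L0 refl S]
  have "fold (pc_step pi n) [2..<Suc m] (L0, \<lambda>_. 0, 3 * n, n + length L0) = (L', ml', c', sp')"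
    using step.hyps IH(1) S by simp
  moreover have "ml' = (\<lambda>v. if v \<in> set L0 then maxlive_after pi v (Suc m) else 0)"
    using step.hyps T(1) IH(2) by (auto simp: maxlive_after_def fun_eq_iff)
  moreover have "(Suc m - 2) * (2 * n + 1) = (m - 2) * (2 * n + 1) + (2 * n + 1)"
    using step.hyps by (metis Suc_diff_le add.commute mult_Suc)
  ultimately show ?case
    using IH(3,4) T(2-4) by (intro step.prems[of ml' c' sp']) auto
qed

lemma maxlive_after_2 [simp]: "maxlive_after pi v 2 = 0"
  by (simp add: maxlive_after_def)

lemma maxlive_after_Suc:
  "2 \<le> m \<Longrightarrow> maxlive_after pi v (Suc m) = maxlive_upd pi m v (maxlive_after pi v m)"
  by (simp add: maxlive_after_def)

text \<open>p starts an occurrence of x[1..v], as far as the prefix table can tell.\<close>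

definition prefix_occ :: "(nat \<Rightarrow> nat) \<Rightarrow> nat \<Rightarrow> nat \<Rightarrow> nat \<Rightarrow> bool" where
  "prefix_occ pi n v p \<longleftrightarrow> p = 1 \<or> (2 \<le> p \<and> p \<le> n \<and> v \<le> pi p)"

definition covered :: "(nat \<Rightarrow> nat) \<Rightarrow> nat \<Rightarrow> nat \<Rightarrow> nat \<Rightarrow> nat \<Rightarrow> bool" where
  "covered pi n v m e \<longleftrightarrow> (\<forall>q\<in>{1..e}. \<exists>p<m. prefix_occ pi n v p \<and> p \<le> q \<and> q < p + v)"

definition last_occ :: "(nat \<Rightarrow> nat) \<Rightarrow> nat \<Rightarrow> nat \<Rightarrow> nat \<Rightarrow> nat" where
  "last_occ pi n v m = Max {p. prefix_occ pi n v p \<and> p < m}"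

lemma prefix_occ_pos: "prefix_occ pi n v p \<Longrightarrow> 1 \<le> p"
  by (auto simp: prefix_occ_def)

lemma last_occ:
  assumes "2 \<le> m"
  shows "prefix_occ pi n v (last_occ pi n v m)" and "last_occ pi n v m < m"
    and "prefix_occ pi n v p \<Longrightarrow> p < m \<Longrightarrow> p \<le> last_occ pi n v m"
proof -
  let ?S = "{p. prefix_occ pi n v p \<and> p < m}"
  have S: "finite ?S" "1 \<in> ?S" using assms by (auto simp: prefix_occ_def)
  have "last_occ pi n v m \<in> ?S"
    unfolding last_occ_def using S by (intro Max_in) auto
  then show "prefix_occ pi n v (last_occ pi n v m)" "last_occ pi n v m < m" by simp_all
  show "prefix_occ pi n v p \<Longrightarrow> p < m \<Longrightarrow> p \<le> last_occ pi n v m"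
    using Max_ge[OF S(1)] by (simp add: last_occ_def)
qed

lemma last_occ_2 [simp]: "last_occ pi n v 2 = 1"
  using last_occ(2)[of 2 pi n v] prefix_occ_pos[OF last_occ(1)[of 2 pi n v]] by simp

lemma last_occ_Suc:
  assumes "2 \<le> m"
  shows "last_occ pi n v (Suc m) = (if prefix_occ pi n v m then m else last_occ pi n v m)"
proof (cases "prefix_occ pi n v m")
  case True
  then have "m \<le> last_occ pi n v (Suc m)" using assms by (intro last_occ(3)) auto
  with True last_occ(2)[of "Suc m" pi n v] assms show ?thesis by simp
next
  case False
  then have "{p. prefix_occ pi n v p \<and> p < Suc m} = {p. prefix_occ pi n v p \<and> p < m}"
    by (auto simp: less_Suc_eq)
  with False show ?thesis by (simp add: last_occ_def)
qed

lemma covered_Suc_no_occ: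
  "\<not> prefix_occ pi n v m \<Longrightarrow> covered pi n v (Suc m) e = covered pi n v m e"
  by (auto simp: covered_def less_Suc_eq)

lemma covered_Suc_occ:
  assumes m: "2 \<le> m" and v: "1 \<le> v" and occ: "prefix_occ pi n v m"
    and lo: "lo = last_occ pi n v m"
  shows "covered pi n v (Suc m) (m + v - 1) \<longleftrightarrow> covered pi n v m (lo + v - 1) \<and> m \<le> lo + v"
proof
  have lo_m: "lo < m" and lo_occ: "prefix_occ pi n v lo" using last_occ[OF m] lo by auto
  assume cov: "covered pi n v (Suc m) (m + v - 1)"
  have "\<exists>p<m. prefix_occ pi n v p \<and> p \<le> q \<and> q < p + v" if q: "q \<in> {1..lo + v - 1}" for q
  proof -
    have "q \<in> {1..m + v - 1}" using q lo_m by auto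
    then obtain p where p: "p < Suc m" "prefix_occ pi n v p" "p \<le> q" "q < p + v"
      using cov unfolding covered_def by blast
    show ?thesis
    proof (cases "p < m")
      case False
      then show ?thesis using p q lo_m lo_occ by (intro exI[of _ lo]) auto
    qed (use p in blast)
  qed
  then show "covered pi n v m (lo + v - 1) \<and> m \<le> lo + v"
  proof (intro conjI)
    have "lo + v \<in> {1..m + v - 1}" using lo_m v by auto
    then obtain p where p: "p < Suc m" "prefix_occ pi n v p" "p \<le> lo + v" "lo + v < p + v"
      using cov unfolding covered_def by blast
    then have "\<not> p < m" using last_occ(3)[OF m p(2)] lo by force
    then show "m \<le> lo + v" using p by simp
  qed (simp add: covered_def)
next
  assume "covered pi n v m (lo + v - 1) \<and> m \<le> lo + v"
  then have cov: "covered pi n v m (lo + v - 1)" and gap: "m \<le> lo + v" by auto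
  show "covered pi n v (Suc m) (m + v - 1)"
    unfolding covered_def
  proof
    fix q assume q: "q \<in> {1..m + v - 1}"
    show "\<exists>p<Suc m. prefix_occ pi n v p \<and> p \<le> q \<and> q < p + v"
    proof (cases "q \<le> lo + v - 1")
      case True
      with q have "q \<in> {1..lo + v - 1}" by simp
      with cov obtain p where "p < m" "prefix_occ pi n v p \<and> p \<le> q \<and> q < p + v"
        unfolding covered_def by blast
      then show ?thesis using less_SucI by blast
    next
      case False
      with q occ gap v show ?thesis by (intro exI[of _ m]) auto
    qed
  qed
qed

definition maxlive_spec :: "(nat \<Rightarrow> nat) \<Rightarrow> nat \<Rightarrow> nat \<Rightarrow> nat \<Rightarrow> int" where
  "maxlive_spec pi n v m =
     (let lo = last_occ pi n v m
      in if covered pi n v m (lo + v - 1) then (if lo = 1 then 0 else int (lo + v - 1)) else -1)"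

lemma maxlive_upd_spec_occ:
  assumes m: "2 \<le> m" and v: "1 \<le> v" "v \<le> pi m" and lo: "lo = last_occ pi n v m"
  shows "maxlive_upd pi m v (maxlive_spec pi n v m)
           = (if covered pi n v m (lo + v - 1) \<and> m \<le> lo + v then int (m + v - 1) else -1)"
proof -
  have "1 \<le> lo" "lo < m" using last_occ[OF m] prefix_occ_pos lo by blast+
  with m v show ?thesis
    unfolding maxlive_upd_def maxlive_spec_def lo[symmetric] Let_def by auto
qed

lemma maxlive_after_eq_spec:
  assumes "1 \<le> v" "2 \<le> m" "m \<le> n + 1"
  shows "maxlive_after pi v m = maxlive_spec pi n v m"
  using assms(2,3)
proof (induction m rule: dec_induct)
  case base
  have "covered pi n v 2 v"
    unfolding covered_def by (auto intro: exI[of _ 1] simp: prefix_occ_def)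
  then show ?case by (simp add: maxlive_spec_def)
next
  case (step k)
  have IH: "maxlive_after pi v k = maxlive_spec pi n v k" and k: "2 \<le> k" "k \<le> n"
    using step by auto
  show ?case
  proof (cases "v \<le> pi k")
    case True
    then have occ: "prefix_occ pi n v k" using k by (simp add: prefix_occ_def)
    let ?lo = "last_occ pi n v k"
    have "maxlive_after pi v (Suc k) = maxlive_upd pi k v (maxlive_spec pi n v k)"
      using k IH by (simp add: maxlive_after_Suc)
    also have "\<dots> = (if covered pi n v k (?lo + v - 1) \<and> k \<le> ?lo + v then int (k + v - 1) else -1)"
      using k(1) assms(1) True by (rule maxlive_upd_spec_occ) simp
    also have "\<dots> = maxlive_spec pi n v (Suc k)"
      using covered_Suc_occ[OF k(1) assms(1) occ refl] k occ
      by (simp add: maxlive_spec_def last_occ_Suc)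
    finally show ?thesis .
  next
    case False
    then have "\<not> prefix_occ pi n v k" using k by (simp add: prefix_occ_def)
    with False k IH show ?thesis
      by (simp add: maxlive_after_Suc maxlive_spec_def last_occ_Suc covered_Suc_no_occ)
  qed
qed

lemma pc_candidates:
  shows "sorted (pc_candidates pi n)" and "distinct (pc_candidates pi n)"
    and "length (pc_candidates pi n) \<le> n"
    and "set (pc_candidates pi n) = pi ` {i \<in> {2..n}. 1 \<le> pi i \<and> pi i + i - 1 = n}"
proof -
  let ?P = "\<lambda>i. 1 \<le> pi i \<and> pi i + i - 1 = n"
  have "[pi i. i \<leftarrow> xs, ?P i] = map pi (filter ?P xs)" for xs
    by (induction xs) auto
  then have C: "pc_candidates pi n = sort (map pi (filter ?P [2..<n+1]))"
    unfolding pc_candidates_def by presburger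
  have "inj_on pi (set (filter ?P [2..<n+1]))"
    by (rule inj_onI) (auto simp del: upt_Suc)
  then show "sorted (pc_candidates pi n)" "distinct (pc_candidates pi n)"
    by (simp_all add: C distinct_map del: upt_Suc)
  show "length (pc_candidates pi n) \<le> n"
    using length_filter_le[of ?P "[2..<n+1]"] by (simp add: C del: upt_Suc)
  show "set (pc_candidates pi n) = pi ` {i \<in> {2..n}. 1 \<le> pi i \<and> pi i + i - 1 = n}"
    by (auto simp add: C simp del: upt_Suc)
qed

lemma pc_run_eq:
  assumes "1 \<le> n"
  obtains c sp
  where "pc_run pi n = ({k \<in> set (pc_candidates pi n). maxlive_after pi k (n + 1) = int n}, c + n, sp)"
    and "c \<le> 3 * n + (n - 1) * (2 * n + 1)" and "sp \<le> 3 * n"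
proof -
  let ?L0 = "pc_candidates pi n"
  have "2 \<le> n + 1" using assms by simp
  obtain ml c sp where
    F: "fold (pc_step pi n) [2..<n+1] (?L0, \<lambda>_. 0, 3 * n, n + length ?L0)
          = (filter (\<lambda>v. ml v \<noteq> -1) ?L0, ml, c, sp)"
    and ml: "ml = (\<lambda>v. if v \<in> set ?L0 then maxlive_after pi v (n + 1) else 0)"
    and c: "c \<le> 3 * n + (n + 1 - 2) * (2 * n + 1)" and sp: "sp \<le> 3 * n"
    using fold_pc_step_spec[OF pc_candidates(1-3)[of pi n] \<open>2 \<le> n + 1\<close>, where pi = pi] by blast
  have "set ?L0 \<subseteq> {1..n}" by (auto simp: pc_candidates(4))
  with ml assms have "{k \<in> {1..n}. ml k = int n} = {k \<in> set ?L0. maxlive_after pi k (n + 1) = int n}"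
    by auto
  with F have "pc_run pi n = ({k \<in> set ?L0. maxlive_after pi k (n + 1) = int n}, c + n, sp)"
    unfolding pc_run_def Let_def by (simp del: upt_Suc)
  with c sp show thesis by (intro that) simp_all
qed

lemma prefix_table_spec:
  assumes "2 \<le> i" "i \<le> n"
  shows "prefix_table x n i \<le> n + 1 - i"
    and "l \<le> n + 1 - i \<Longrightarrow> l \<le> prefix_table x n i \<longleftrightarrow> substr_match x i 1 l"
proof -
  let ?P = "\<lambda>l. l \<le> n + 1 - i \<and> substr_match x i 1 l"
  have pt: "prefix_table x n i = (GREATEST l. ?P l)" using assms by (simp add: prefix_table_def)
  have max: "?P (prefix_table x n i)"
    unfolding pt by (rule GreatestI_nat[of _ 0 "n + 1 - i"]) (simp_all add: substr_match_def)
  then show "prefix_table x n i \<le> n + 1 - i" by simp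
  assume l: "l \<le> n + 1 - i"
  show "l \<le> prefix_table x n i \<longleftrightarrow> substr_match x i 1 l"
  proof
    assume "l \<le> prefix_table x n i"
    with max show "substr_match x i 1 l" by (auto simp: substr_match_def)
  next
    assume "substr_match x i 1 l"
    with l show "l \<le> prefix_table x n i" unfolding pt by (intro Greatest_le_nat[of _ _ "n + 1 - i"]) auto
  qed
qed

lemma prefix_occ_prefix_table_bound:
  assumes "prefix_occ (prefix_table x n) n k p" "k \<le> n"
  shows "p + k \<le> n + 1"
  using assms prefix_table_spec(1)[of p n x] by (auto simp: prefix_occ_def)

lemma substr_match_iff_prefix_occ:
  assumes x: "ind_string x n" and "1 \<le> k" "1 \<le> p" "p + k \<le> n + 1"
  shows "substr_match x p 1 k \<longleftrightarrow> prefix_occ (prefix_table x n) n k p"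
proof (cases "p = 1")
  case True
  with assms show ?thesis by (auto simp: substr_match_def prefix_occ_def ind_string_def)
next
  case False
  with assms have "2 \<le> p" "p \<le> n" "k \<le> n + 1 - p" by auto
  with False show ?thesis using prefix_table_spec(2)[of p n k x] by (auto simp: prefix_occ_def)
qed

lemma rooted_cover_iff_covered:
  assumes x: "ind_string x n"
  shows "rooted_cover x n k \<longleftrightarrow> 1 \<le> k \<and> k < n \<and> covered (prefix_table x n) n k (n + 1) n"
proof -
  have "(\<exists>p. 1 \<le> p \<and> p + k - 1 \<le> n \<and> p \<le> q \<and> q \<le> p + k - 1 \<and> substr_match x p 1 k)
    \<longleftrightarrow> (\<exists>p<n + 1. prefix_occ (prefix_table x n) n k p \<and> p \<le> q \<and> q < p + k)"
    if k: "1 \<le> k" "k < n" for q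
  proof -
    have "1 \<le> p \<and> p + k - 1 \<le> n \<and> p \<le> q \<and> q \<le> p + k - 1 \<and> substr_match x p 1 k \<longleftrightarrow>
          p < n + 1 \<and> prefix_occ (prefix_table x n) n k p \<and> p \<le> q \<and> q < p + k" for p
      using substr_match_iff_prefix_occ[OF x k(1), of p] k
        prefix_occ_prefix_table_bound[of x n k p] prefix_occ_pos[of "prefix_table x n" n k p]
      by auto
    then show ?thesis by blast
  qed
  then show ?thesis unfolding rooted_cover_def covered_def by auto
qed

lemma mem_pc_candidates_prefix_table:
  "k \<in> set (pc_candidates (prefix_table x n) n) \<longleftrightarrow>
     1 \<le> k \<and> k < n \<and> prefix_occ (prefix_table x n) n k (n + 1 - k)"
  (is "_ \<longleftrightarrow> ?rhs")
proof
  assume "k \<in> set (pc_candidates (prefix_table x n) n)"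
  then obtain i where "2 \<le> i" "i \<le> n" "1 \<le> prefix_table x n i"
    "prefix_table x n i + i - 1 = n" "k = prefix_table x n i"
    by (auto simp: pc_candidates(4))
  moreover from this have "n + 1 - k = i" "k < n" by linarith+
  ultimately show ?rhs by (simp add: prefix_occ_def)
next
  assume ?rhs
  then have i: "2 \<le> n + 1 - k" "n + 1 - k \<le> n" "k \<le> prefix_table x n (n + 1 - k)" "1 \<le> k"
    by (auto simp: prefix_occ_def)
  with prefix_table_spec(1)[OF i(1,2), of x] have "prefix_table x n (n + 1 - k) = k" by simp
  with i show "k \<in> set (pc_candidates (prefix_table x n) n)"
    by (auto simp: pc_candidates(4) image_iff intro!: bexI[of _ "n + 1 - k"])
qed

lemma covered_imp_prefix_occ_suffix:
  assumes "covered (prefix_table x n) n k (n + 1) n" "1 \<le> k" "k \<le> n"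
  shows "prefix_occ (prefix_table x n) n k (n + 1 - k)"
proof -
  have "n \<in> {1..n}" using assms by simp
  then obtain p where p: "prefix_occ (prefix_table x n) n k p" "p \<le> n" "n < p + k"
    using assms(1) unfolding covered_def by blast
  with prefix_occ_prefix_table_bound[OF p(1) assms(3)] have "p = n + 1 - k" by simp
  with p show ?thesis by simp
qed

lemma maxlive_after_suffix:
  assumes "1 \<le> k" "k < n" "prefix_occ (prefix_table x n) n k (n + 1 - k)"
  shows "maxlive_after (prefix_table x n) k (n + 1)
           = (if covered (prefix_table x n) n k (n + 1) n then int n else -1)"
proof -
  let ?pi = "prefix_table x n"
  have m: "2 \<le> n + 1" using assms by simp
  have "last_occ ?pi n k (n + 1) \<le> n + 1 - k"
    using prefix_occ_prefix_table_bound[OF last_occ(1)[OF m, of ?pi n k]] assms by simp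
  moreover have "n + 1 - k \<le> last_occ ?pi n k (n + 1)"
    using last_occ(3)[OF m assms(3)] assms by simp
  ultimately have "last_occ ?pi n k (n + 1) = n + 1 - k" by simp
  moreover have "n + 1 - k \<noteq> 1" using assms by simp
  ultimately show ?thesis
    using assms maxlive_after_eq_spec[of k "n + 1" n ?pi] by (simp add: maxlive_spec_def Let_def)
qed

lemma PCInd_prefix_table:
  assumes x: "ind_string x n"
  shows "PCInd (prefix_table x n) n = {\<kappa>. rooted_cover x n \<kappa>}"
proof -
  let ?pi = "prefix_table x n"
  have n: "1 \<le> n" using x by (simp add: ind_string_def)
  obtain c sp where
    "pc_run ?pi n = ({k \<in> set (pc_candidates ?pi n). maxlive_after ?pi k (n + 1) = int n}, c + n, sp)"
    using pc_run_eq[OF n] by blast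
  then have PCInd: "PCInd ?pi n = {k \<in> set (pc_candidates ?pi n). maxlive_after ?pi k (n + 1) = int n}"
    by (simp add: PCInd_def)
  have "k \<in> set (pc_candidates ?pi n) \<and> maxlive_after ?pi k (n + 1) = int n \<longleftrightarrow> rooted_cover x n k"
    for k
  proof (cases "1 \<le> k \<and> k < n \<and> prefix_occ ?pi n k (n + 1 - k)")
    case True
    then have "k \<in> set (pc_candidates ?pi n)"
      using mem_pc_candidates_prefix_table by blast
    moreover have "maxlive_after ?pi k (n + 1) = (if covered ?pi n k (n + 1) n then int n else -1)"
      using True by (intro maxlive_after_suffix) auto
    moreover have "rooted_cover x n k \<longleftrightarrow> covered ?pi n k (n + 1) n"
      using True rooted_cover_iff_covered[OF x] by blast
    ultimately show ?thesis using n by simp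
  next
    case False
    then have "k \<notin> set (pc_candidates ?pi n)"
      using mem_pc_candidates_prefix_table by blast
    moreover have "\<not> rooted_cover x n k"
      using False rooted_cover_iff_covered[OF x] covered_imp_prefix_occ_suffix[of x n k]
      by (meson less_imp_le_nat)
    ultimately show ?thesis by blast
  qed
  then show ?thesis unfolding PCInd by blast
qed

lemma PCInd_cost:
  assumes "1 \<le> n"
  shows "PCInd_time pi n \<le> 7 * n\<^sup>2" and "PCInd_space pi n \<le> 7 * n"
proof -
  obtain \<Gamma> c sp where run: "pc_run pi n = (\<Gamma>, c + n, sp)"
    and c: "c \<le> 3 * n + (n - 1) * (2 * n + 1)" and sp: "sp \<le> 3 * n"
    using pc_run_eq[OF assms] by blast
  have "(n - 1) * (2 * n + 1) \<le> n * (2 * n + 1)" by (rule mult_le_mono1) simp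
  also have "\<dots> = 2 * n\<^sup>2 + n" by (simp add: power2_eq_square algebra_simps)
  finally have "c + n \<le> 2 * n\<^sup>2 + 5 * n" using c by linarith
  moreover have "n \<le> n\<^sup>2" using assms by (simp add: power2_eq_square)
  ultimately show "PCInd_time pi n \<le> 7 * n\<^sup>2" using run by (simp add: PCInd_time_def)
  show "PCInd_space pi n \<le> 7 * n" using sp run by (simp add: PCInd_space_def)
qed

theorem theorem2:
  "(\<forall>(x :: nat \<Rightarrow> 'a set) n. ind_string x n \<longrightarrow>
       PCInd (prefix_table x n) n = {\<kappa>. rooted_cover x n \<kappa>})
   \<and> (\<exists>C :: nat. \<forall>(x :: nat \<Rightarrow> 'a set) n. ind_string x n \<longrightarrow>
       PCInd_time (prefix_table x n) n \<le> C * n ^ 2 \<and>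
       PCInd_space (prefix_table x n) n \<le> C * n)"
proof (intro conjI)
  show "\<forall>(x :: nat \<Rightarrow> 'a set) n. ind_string x n \<longrightarrow>
      PCInd (prefix_table x n) n = {\<kappa>. rooted_cover x n \<kappa>}"
    using PCInd_prefix_table by blast
  have "PCInd_time (prefix_table x n) n \<le> 7 * n ^ 2 \<and> PCInd_space (prefix_table x n) n \<le> 7 * n"
    if "ind_string x n" for x :: "nat \<Rightarrow> 'a set" and n
    using that PCInd_cost[of n] by (simp add: ind_string_def)
  then show "\<exists>C :: nat. \<forall>(x :: nat \<Rightarrow> 'a set) n. ind_string x n \<longrightarrow>
      PCInd_time (prefix_table x n) n \<le> C * n ^ 2 \<and> PCInd_space (prefix_table x n) n \<le> C * n"
    by blast
qed

end
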